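(* Let $k,d\geq 4$. Let $G$ be a finite $C_4$-free bipartite graph with vertex classes $A$ and $B$. Let $A=A_1\cup\dots\cup A_r$ and $B=B_1\cup\dots\cup B_s$ be partitions with $|A_i|\leq d^2$ and $|B_j|\leq d^2$ for all $i\in[r]$, $j\in[s]$. Define the graph $H$ on vertex set $\{a_1,\dots,a_r,b_1,\dots,b_s\}$ in which $a_ib_j$ is an edge exactly if $G$ has at least one edge between $A_i$ and $B_j$ (and there are no other edges). Suppose $H$ is $k$-degenerate. Then $d(G)\leq 13kd$.
   Context: $d(G)=2e(G)/|V(G)|$ is the average degree. A graph is $C_4$-free if it contains no $4$-cycle as a subgraph. A graph is $k$-degenerate if every subgraph of it has a vertex of degree at most $k$. *)

theory Defs
  imports Complex_Main "HOL-Library.Disjoint_Sets"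
begin

definition simple_graph :: "'a set \<Rightarrow> 'a set set \<Rightarrow> bool" where
  "simple_graph V E \<longleftrightarrow> finite V \<and> (\<forall>e\<in>E. e \<subseteq> V \<and> card e = 2)"

definition avg_degree :: "'a set \<Rightarrow> 'a set set \<Rightarrow> real" where
  "avg_degree V E = 2 * real (card E) / real (card V)"

definition degree :: "'a set set \<Rightarrow> 'a \<Rightarrow> nat" where
  "degree E v = card {e \<in> E. v \<in> e}"

definition C4_free :: "'a set set \<Rightarrow> bool" where
  "C4_free E \<longleftrightarrow> \<not> (\<exists>v1 v2 v3 v4. distinct [v1, v2, v3, v4] \<and>
      {v1, v2} \<in> E \<and> {v2, v3} \<in> E \<and> {v3, v4} \<in> E \<and> {v4, v1} \<in> E)"

definition bipartite_classes :: "'a set \<Rightarrow> 'a set set \<Rightarrow> 'a set \<Rightarrow> 'a set \<Rightarrow> bool" where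
  "bipartite_classes V E A B \<longleftrightarrow> A \<union> B = V \<and> A \<inter> B = {} \<and>
     (\<forall>e\<in>E. \<exists>a\<in>A. \<exists>b\<in>B. e = {a, b})"

definition degenerate :: "nat \<Rightarrow> 'a set \<Rightarrow> 'a set set \<Rightarrow> bool" where
  "degenerate k V E \<longleftrightarrow> (\<forall>V' E'. V' \<subseteq> V \<and> V' \<noteq> {} \<and> E' \<subseteq> E \<and> (\<forall>e\<in>E'. e \<subseteq> V')
       \<longrightarrow> (\<exists>v\<in>V'. degree E' v \<le> k))"

definition H_vertices :: "'a set set \<Rightarrow> 'a set set \<Rightarrow> ('a set + 'a set) set" where
  "H_vertices PA PB = Inl ` PA \<union> Inr ` PB"

definition H_edges :: "'a set set \<Rightarrow> 'a set set \<Rightarrow> 'a set set \<Rightarrow> ('a set + 'a set) set set" where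
  "H_edges E PA PB = {{Inl X, Inr Y} | X Y. X \<in> PA \<and> Y \<in> PB \<and> (\<exists>a\<in>X. \<exists>b\<in>Y. {a, b} \<in> E)}"

end

theory Submission
  imports Defs
begin

text \<open>The parts are treated as the fibres of the map sending a vertex of \<open>G\<close> to its vertex of \<open>H\<close>.
  Call an edge \<open>xy\<close> heavy if \<open>x\<close> has more than \<open>d\<close> neighbours in the part of \<open>y\<close>.
  Since \<open>G\<close> is \<open>C\<^sub>4\<close>-free, two vertices have at most one common neighbour, so the pairs of
  neighbours that different vertices have inside a part \<open>Q\<close> are different pairs of \<open>Q\<close>. A heavy
  vertex \<open>x\<close> owns at least \<open>d |N(x) \<inter> Q| / 2\<close> such pairs, and \<open>|Q| \<le> d\<^sup>2\<close>; hence at most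
  \<open>d |Q|\<close> heavy edges end in \<open>Q\<close>, and at most \<open>d |V|\<close> edges are heavy altogether.
  The light edges are counted along a degeneracy ordering of \<open>H\<close>: a part with at most \<open>k\<close>
  neighbours among the remaining parts sends at most \<open>d\<close> light edges from each of its vertices
  into each of them. So \<open>|E| \<le> (k + 1) d |V|\<close>, and of the hypotheses \<open>k, d \<ge> 4\<close> only
  \<open>k \<ge> 1\<close> is needed.\<close>

lemma card_eq_sum_card_fibres:
  assumes "finite V"
  shows "card V = (\<Sum>u\<in>f ` V. card {z\<in>V. f z = u})"
  using sum.image_gen[OF assms, of "\<lambda>_. 1 :: nat" f] by simp

definition neighbours :: "'a set set \<Rightarrow> 'a \<Rightarrow> 'a set" where
  "neighbours E x = {y. {x, y} \<in> E}"

lemma neighbours_subset: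
  assumes "simple_graph V E"
  shows "neighbours E x \<subseteq> V"
  using assms unfolding simple_graph_def neighbours_def by blast

lemma finite_neighbours:
  assumes "simple_graph V E"
  shows "finite (neighbours E x)"
  using assms neighbours_subset finite_subset unfolding simple_graph_def by metis

lemma simple_graph_finite_edges:
  assumes "simple_graph V E"
  shows "finite E"
  using assms unfolding simple_graph_def by (meson PowI finite_Pow_iff finite_subset subsetI)

lemma C4_free_common_neighbour_unique:
  assumes edges: "\<forall>e\<in>E. card e = 2" and "C4_free E" and "x \<noteq> x'"
    and y: "y \<in> neighbours E x \<inter> neighbours E x'"
    and y': "y' \<in> neighbours E x \<inter> neighbours E x'"
  shows "y = y'"
proof (rule ccontr)
  assume "y \<noteq> y'"
  have no_loops: "{z} \<notin> E" for z
    using edges by fastforce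
  have "{x, y} \<in> E" "{y, x'} \<in> E" "{x', y'} \<in> E" "{y', x} \<in> E"
    using y y' by (auto simp: neighbours_def insert_commute)
  moreover from this have "distinct [x, y, x', y']"
    using \<open>x \<noteq> x'\<close> \<open>y \<noteq> y'\<close> no_loops by auto
  ultimately show False
    using \<open>C4_free E\<close> unfolding C4_free_def by blast
qed

lemma C4_free_sum_choose_two_le:
  assumes edges: "\<forall>e\<in>E. card e = 2" and "C4_free E" and "finite Q" and "finite X"
  shows "(\<Sum>x\<in>X. card (neighbours E x \<inter> Q) choose 2) \<le> card Q choose 2"
proof -
  define pairs where "pairs x = {p. p \<subseteq> neighbours E x \<inter> Q \<and> card p = 2}" for x
  have finite_pairs: "finite (pairs x)" for x
    using \<open>finite Q\<close> unfolding pairs_def by auto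
  have card_pairs: "card (pairs x) = card (neighbours E x \<inter> Q) choose 2" for x
    unfolding pairs_def using \<open>finite Q\<close> by (intro n_subsets) simp
  have "pairs x \<inter> pairs x' = {}" if "x \<noteq> x'" for x x'
  proof (rule ccontr)
    assume "pairs x \<inter> pairs x' \<noteq> {}"
    then obtain y y' where "y \<noteq> y'" "{y, y'} \<subseteq> neighbours E x \<inter> neighbours E x'"
      unfolding pairs_def by (auto simp: card_2_iff)
    then show False
      using C4_free_common_neighbour_unique[OF edges \<open>C4_free E\<close> that] by blast
  qed
  then have "(\<Sum>x\<in>X. card (neighbours E x \<inter> Q) choose 2) = card (\<Union>x\<in>X. pairs x)"
    using card_UN_disjoint[OF \<open>finite X\<close>] finite_pairs card_pairs by (metis (no_types, lifting) sum.cong)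
  also have "\<dots> \<le> card {p. p \<subseteq> Q \<and> card p = 2}"
    using \<open>finite Q\<close> by (intro card_mono) (auto simp: pairs_def)
  also have "\<dots> = card Q choose 2"
    using \<open>finite Q\<close> by (rule n_subsets)
  finally show ?thesis .
qed

lemma C4_free_sum_heavy_degrees_le:
  assumes "\<forall>e\<in>E. card e = 2" and "C4_free E" and "finite Q" and "finite X"
    and heavy: "\<forall>x\<in>X. d < card (neighbours E x \<inter> Q)"
  shows "d * (\<Sum>x\<in>X. card (neighbours E x \<inter> Q)) \<le> card Q * (card Q - 1)"
proof -
  have two_choose_two: "2 * (n choose 2) = n * (n - 1)" for n :: nat
    by (cases n) (auto simp: choose_two)
  have "d * (\<Sum>x\<in>X. card (neighbours E x \<inter> Q)) = (\<Sum>x\<in>X. card (neighbours E x \<inter> Q) * d)"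
    by (simp add: sum_distrib_left mult.commute)
  also have "\<dots> \<le> (\<Sum>x\<in>X. 2 * (card (neighbours E x \<inter> Q) choose 2))"
    unfolding two_choose_two using heavy by (intro sum_mono mult_le_mono2) auto
  also have "\<dots> \<le> 2 * (card Q choose 2)"
    using C4_free_sum_choose_two_le[OF assms(1-4)] by (simp add: sum_distrib_left[symmetric])
  finally show ?thesis
    unfolding two_choose_two .
qed

lemma C4_free_card_heavy_edges_into_le:
  assumes G: "simple_graph V E" and "C4_free E" and "Q \<subseteq> V" and "card Q \<le> d^2"
  shows "card {e\<in>E. \<exists>x y. e = {x, y} \<and> y \<in> Q \<and> d < card (neighbours E x \<inter> Q)} \<le> d * card Q"
    (is "card ?heavy \<le> _")
proof (cases "d = 0")
  case True
  with assms show ?thesis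
    unfolding simple_graph_def by (auto dest: finite_subset)
next
  case False
  have "finite V" "\<forall>e\<in>E. card e = 2"
    using G unfolding simple_graph_def by auto
  have "finite Q"
    using \<open>Q \<subseteq> V\<close> \<open>finite V\<close> by (rule finite_subset)
  define X where "X = {x\<in>V. d < card (neighbours E x \<inter> Q)}"
  define s where "s = (\<Sum>x\<in>X. card (neighbours E x \<inter> Q))"
  have "finite X"
    using \<open>finite V\<close> unfolding X_def by simp
  have "?heavy \<subseteq> (\<Union>x\<in>X. (\<lambda>y. {x, y}) ` (neighbours E x \<inter> Q))"
    using G unfolding X_def neighbours_def simple_graph_def by blast
  then have "card ?heavy \<le> card (\<Union>x\<in>X. (\<lambda>y. {x, y}) ` (neighbours E x \<inter> Q))"
    using \<open>finite X\<close> \<open>finite Q\<close> by (intro card_mono) auto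
  also have "\<dots> \<le> (\<Sum>x\<in>X. card ((\<lambda>y. {x, y}) ` (neighbours E x \<inter> Q)))"
    using \<open>finite X\<close> by (rule card_UN_le)
  also have "\<dots> \<le> s"
    unfolding s_def by (intro sum_mono card_image_le) (simp add: \<open>finite Q\<close>)
  finally have "card ?heavy \<le> s" .
  have "d * s \<le> card Q * (card Q - 1)"
    unfolding s_def using C4_free_sum_heavy_degrees_le[OF _ \<open>C4_free E\<close> \<open>finite Q\<close> \<open>finite X\<close>]
      \<open>\<forall>e\<in>E. card e = 2\<close> by (simp add: X_def)
  also have "\<dots> \<le> card Q * d^2"
    using \<open>card Q \<le> d^2\<close> by (intro mult_le_mono2) simp
  finally have "d * s \<le> d * (d * card Q)"
    by (simp add: power2_eq_square ac_simps)
  with \<open>d \<noteq> 0\<close> \<open>card ?heavy \<le> s\<close> show ?thesis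
    by simp
qed

definition heavy_edges :: "'a set set \<Rightarrow> ('a \<Rightarrow> 'b) \<Rightarrow> nat \<Rightarrow> 'a set set" where
  "heavy_edges E f d = {e\<in>E. \<exists>x y. e = {x, y} \<and> d < card {z \<in> neighbours E x. f z = f y}}"

lemma C4_free_card_heavy_edges_le:
  assumes G: "simple_graph V E" and "C4_free E"
    and fibres: "\<forall>u. card {z\<in>V. f z = u} \<le> d^2"
  shows "card (heavy_edges E f d) \<le> d * card V"
proof -
  have "finite V"
    using G unfolding simple_graph_def by simp
  define fibre where "fibre u = {z\<in>V. f z = u}" for u
  define heavy_into where
    "heavy_into Q = {e\<in>E. \<exists>x y. e = {x, y} \<and> y \<in> Q \<and> d < card (neighbours E x \<inter> Q)}" for Q
  have "heavy_edges E f d \<subseteq> (\<Union>u\<in>f ` V. heavy_into (fibre u))"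
  proof
    fix e assume "e \<in> heavy_edges E f d"
    then obtain x y where e: "e \<in> E" "e = {x, y}" and "d < card {z \<in> neighbours E x. f z = f y}"
      unfolding heavy_edges_def by blast
    moreover have "y \<in> V"
      using G e unfolding simple_graph_def by blast
    moreover have "{z \<in> neighbours E x. f z = f y} = neighbours E x \<inter> fibre (f y)"
      using neighbours_subset[OF G] unfolding fibre_def by blast
    ultimately have "e \<in> heavy_into (fibre (f y))"
      unfolding heavy_into_def fibre_def by auto
    with \<open>y \<in> V\<close> show "e \<in> (\<Union>u\<in>f ` V. heavy_into (fibre u))"
      by blast
  qed
  moreover have "finite (\<Union>u\<in>f ` V. heavy_into (fibre u))"
    by (rule finite_subset[OF _ simple_graph_finite_edges[OF G]]) (auto simp: heavy_into_def)
  ultimately have "card (heavy_edges E f d) \<le> card (\<Union>u\<in>f ` V. heavy_into (fibre u))"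
    by (simp add: card_mono)
  also have "\<dots> \<le> (\<Sum>u\<in>f ` V. card (heavy_into (fibre u)))"
    using \<open>finite V\<close> by (intro card_UN_le) simp
  also have "\<dots> \<le> (\<Sum>u\<in>f ` V. d * card (fibre u))"
    unfolding heavy_into_def fibre_def using fibres
    by (intro sum_mono C4_free_card_heavy_edges_into_le[OF G \<open>C4_free E\<close>]) auto
  also have "\<dots> = d * card V"
    using card_eq_sum_card_fibres[OF \<open>finite V\<close>, of f]
    by (simp add: fibre_def sum_distrib_left[symmetric])
  finally show ?thesis .
qed

lemma card_light_neighbours_le:
  assumes G: "simple_graph V E"
  shows "card {y. {x, y} \<in> E - heavy_edges E f d \<and> f y = u} \<le> d"
proof (cases "{y. {x, y} \<in> E - heavy_edges E f d \<and> f y = u} = {}")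
  case True
  show ?thesis
    unfolding True by simp
next
  case False
  then obtain y\<^sub>0 where "{x, y\<^sub>0} \<in> E - heavy_edges E f d" "f y\<^sub>0 = u"
    by blast
  then have not_heavy: "card {z \<in> neighbours E x. f z = u} \<le> d"
    unfolding heavy_edges_def by (auto simp: not_less)
  have "{y. {x, y} \<in> E - heavy_edges E f d \<and> f y = u} \<subseteq> {z \<in> neighbours E x. f z = u}"
    unfolding neighbours_def by blast
  then have "card {y. {x, y} \<in> E - heavy_edges E f d \<and> f y = u} \<le> card {z \<in> neighbours E x. f z = u}"
    using finite_neighbours[OF G] by (intro card_mono) auto
  with not_heavy show ?thesis
    by linarith
qed

lemma degenerate_low_degree_vertex:
  assumes "degenerate k W F" and "U \<subseteq> W" and "U \<noteq> {}" and "finite U"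
  obtains w where "w \<in> U" and "card {u\<in>U. {w, u} \<in> F} \<le> k"
proof -
  define F' where "F' = {h\<in>F. h \<subseteq> U}"
  have "F' \<subseteq> F" and "\<forall>h\<in>F'. h \<subseteq> U"
    unfolding F'_def by auto
  then obtain w where "w \<in> U" and "degree F' w \<le> k"
    using assms(1-3) unfolding degenerate_def by blast
  have "finite F'"
    using \<open>finite U\<close> unfolding F'_def by (auto intro: finite_subset[of _ "Pow U"])
  have "inj_on (\<lambda>u. {w, u}) {u\<in>U. {w, u} \<in> F}"
    by (rule inj_onI) (metis doubleton_eq_iff)
  moreover have "(\<lambda>u. {w, u}) ` {u\<in>U. {w, u} \<in> F} \<subseteq> {h\<in>F'. w \<in> h}"
    using \<open>w \<in> U\<close> unfolding F'_def by auto
  ultimately have "card {u\<in>U. {w, u} \<in> F} \<le> degree F' w"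
    unfolding degree_def using \<open>finite F'\<close> by (intro card_inj_on_le) auto
  with \<open>w \<in> U\<close> \<open>degree F' w \<le> k\<close> show thesis
    using that by simp
qed

lemma card_edges_at_vertex_le:
  assumes "finite L" and "finite U"
    and edges: "\<forall>e\<in>L. \<exists>a b. e = {a, b} \<and> {f a, f b} \<in> F"
    and fibre_degree: "\<forall>u. card {y. {x, y} \<in> L \<and> f y = u} \<le> c"
    and low_degree: "card {u\<in>U. {f x, u} \<in> F} \<le> k"
  shows "card {e\<in>L. x \<in> e \<and> f ` e \<subseteq> U} \<le> k * c"
proof -
  define N where "N = {u\<in>U. {f x, u} \<in> F}"
  have cover: "{e\<in>L. x \<in> e \<and> f ` e \<subseteq> U} \<subseteq> (\<Union>u\<in>N. (\<lambda>y. {x, y}) ` {y. {x, y} \<in> L \<and> f y = u})"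
  proof
    fix e assume e: "e \<in> {e\<in>L. x \<in> e \<and> f ` e \<subseteq> U}"
    then have "e \<in> L"
      by simp
    with edges obtain a b where "e = {a, b}" "{f a, f b} \<in> F"
      by meson
    moreover have "x = a \<or> x = b"
      using e \<open>e = {a, b}\<close> by blast
    ultimately obtain y where "e = {x, y}" "{f x, f y} \<in> F"
      by (metis insert_commute)
    with e show "e \<in> (\<Union>u\<in>N. (\<lambda>y. {x, y}) ` {y. {x, y} \<in> L \<and> f y = u})"
      unfolding N_def by auto
  qed
  have "finite (\<Union>L)"
    using \<open>finite L\<close> edges by (metis finite.emptyI finite_Union finite_insert)
  then have finite_fibre_neighbours: "finite {y. {x, y} \<in> L \<and> f y = u}" for u
    by (rule finite_subset[rotated]) blast
  have "card {e\<in>L. x \<in> e \<and> f ` e \<subseteq> U}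
      \<le> card (\<Union>u\<in>N. (\<lambda>y. {x, y}) ` {y. {x, y} \<in> L \<and> f y = u})"
    using finite_fibre_neighbours \<open>finite U\<close> by (intro card_mono[OF _ cover]) (auto simp: N_def)
  also have "\<dots> \<le> (\<Sum>u\<in>N. card ((\<lambda>y. {x, y}) ` {y. {x, y} \<in> L \<and> f y = u}))"
    using \<open>finite U\<close> unfolding N_def by (intro card_UN_le) simp
  also have "\<dots> \<le> (\<Sum>u\<in>N. card {y. {x, y} \<in> L \<and> f y = u})"
    using finite_fibre_neighbours by (intro sum_mono card_image_le)
  also have "\<dots> \<le> card N * c"
    using sum_mono[of N _ "\<lambda>_. c"] fibre_degree by simp
  also have "\<dots> \<le> k * c"
    using low_degree unfolding N_def by simp
  finally show ?thesis .
qed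

lemma card_edges_over_remove_le:
  assumes "finite V" and "L \<subseteq> Pow V" and "finite U"
    and edges: "\<forall>e\<in>L. \<exists>a b. e = {a, b} \<and> {f a, f b} \<in> F"
    and fibre_degree: "\<forall>x u. card {y. {x, y} \<in> L \<and> f y = u} \<le> c"
    and low_degree: "card {u\<in>U. {w, u} \<in> F} \<le> k"
  shows "card {e\<in>L. f ` e \<subseteq> U} \<le> card {e\<in>L. f ` e \<subseteq> U - {w}} + k * c * card {x\<in>V. f x = w}"
proof -
  define fibre where "fibre = {x\<in>V. f x = w}"
  have "finite L"
    using \<open>finite V\<close> \<open>L \<subseteq> Pow V\<close> by (simp add: finite_subset)
  have "{e\<in>L. f ` e \<subseteq> U} \<subseteq> {e\<in>L. f ` e \<subseteq> U - {w}} \<union> (\<Union>x\<in>fibre. {e\<in>L. x \<in> e \<and> f ` e \<subseteq> U})"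
    using \<open>L \<subseteq> Pow V\<close> unfolding fibre_def by blast
  then have "card {e\<in>L. f ` e \<subseteq> U}
      \<le> card ({e\<in>L. f ` e \<subseteq> U - {w}} \<union> (\<Union>x\<in>fibre. {e\<in>L. x \<in> e \<and> f ` e \<subseteq> U}))"
    by (rule card_mono[rotated]) (auto intro: finite_subset[OF _ \<open>finite L\<close>])
  also have "\<dots> \<le> card {e\<in>L. f ` e \<subseteq> U - {w}} + card (\<Union>x\<in>fibre. {e\<in>L. x \<in> e \<and> f ` e \<subseteq> U})"
    by (rule card_Un_le)
  also have "card (\<Union>x\<in>fibre. {e\<in>L. x \<in> e \<and> f ` e \<subseteq> U}) \<le> (\<Sum>x\<in>fibre. card {e\<in>L. x \<in> e \<and> f ` e \<subseteq> U})"
    using \<open>finite V\<close> unfolding fibre_def by (intro card_UN_le) simp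
  also have "\<dots> \<le> (\<Sum>x\<in>fibre. k * c)"
    using low_degree unfolding fibre_def
    by (intro sum_mono card_edges_at_vertex_le[OF \<open>finite L\<close> \<open>finite U\<close> edges]) (auto simp: fibre_degree)
  finally show ?thesis
    unfolding fibre_def by (simp add: mult.commute)
qed

lemma degenerate_card_edges_le:
  assumes "degenerate k W F" and "finite V" and "f ` V \<subseteq> W"
    and edges: "\<forall>e\<in>L. \<exists>a b. e = {a, b} \<and> a \<in> V \<and> b \<in> V \<and> {f a, f b} \<in> F"
    and fibre_degree: "\<forall>x u. card {y. {x, y} \<in> L \<and> f y = u} \<le> c"
  shows "card L \<le> k * c * card V"
proof -
  have "L \<subseteq> Pow V"
    using edges by auto
  have edges_F: "\<forall>e\<in>L. \<exists>a b. e = {a, b} \<and> {f a, f b} \<in> F"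
    using edges by meson
  have "finite (f ` V)"
    using \<open>finite V\<close> by simp
  then have "card {e\<in>L. f ` e \<subseteq> f ` V} \<le> k * c * card {x\<in>V. f x \<in> f ` V}"
  proof (induction rule: finite_remove_induct)
    case empty
    have "{e\<in>L. f ` e \<subseteq> {}} = {}"
      using edges by auto
    then show ?case
      by simp
  next
    case (remove U)
    then have "U \<subseteq> W"
      using \<open>f ` V \<subseteq> W\<close> by blast
    then obtain w where "w \<in> U" and low_degree: "card {u\<in>U. {w, u} \<in> F} \<le> k"
      using degenerate_low_degree_vertex[OF \<open>degenerate k W F\<close>] remove.hyps(1,2) by blast
    have "{x\<in>V. f x \<in> U} = {x\<in>V. f x \<in> U - {w}} \<union> {x\<in>V. f x = w}"
      using \<open>w \<in> U\<close> by auto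
    then have split_vertices: "card {x\<in>V. f x \<in> U} = card {x\<in>V. f x \<in> U - {w}} + card {x\<in>V. f x = w}"
      using \<open>finite V\<close> by (simp add: card_Un_disjoint disjoint_iff)
    have "card {e\<in>L. f ` e \<subseteq> U} \<le> card {e\<in>L. f ` e \<subseteq> U - {w}} + k * c * card {x\<in>V. f x = w}"
      using card_edges_over_remove_le[OF \<open>finite V\<close> \<open>L \<subseteq> Pow V\<close> remove.hyps(1) edges_F fibre_degree low_degree] .
    also have "\<dots> \<le> k * c * card {x\<in>V. f x \<in> U - {w}} + k * c * card {x\<in>V. f x = w}"
      using remove.IH[OF \<open>w \<in> U\<close>] by simp
    finally show ?case
      unfolding split_vertices by (simp add: add_mult_distrib2)
  qed
  moreover have "{e\<in>L. f ` e \<subseteq> f ` V} = L"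
    using edges by auto
  moreover have "{x\<in>V. f x \<in> f ` V} = V"
    by auto
  ultimately show ?thesis
    by simp
qed

lemma C4_free_card_edges_le_degenerate_image:
  assumes G: "simple_graph V E" and "C4_free E" and "degenerate k W F" and "f ` V \<subseteq> W"
    and edges: "\<forall>e\<in>E. \<exists>a b. e = {a, b} \<and> {f a, f b} \<in> F"
    and fibres: "\<forall>u. card {z\<in>V. f z = u} \<le> d^2"
  shows "card E \<le> (k + 1) * d * card V"
proof -
  have "finite V"
    using G unfolding simple_graph_def by simp
  have "\<forall>e\<in>E - heavy_edges E f d. \<exists>a b. e = {a, b} \<and> a \<in> V \<and> b \<in> V \<and> {f a, f b} \<in> F"
  proof
    fix e assume "e \<in> E - heavy_edges E f d"
    then have "e \<in> E" and "e \<subseteq> V"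
      using G unfolding simple_graph_def by auto
    with edges show "\<exists>a b. e = {a, b} \<and> a \<in> V \<and> b \<in> V \<and> {f a, f b} \<in> F"
      by fastforce
  qed
  moreover have "\<forall>x u. card {y. {x, y} \<in> E - heavy_edges E f d \<and> f y = u} \<le> d"
    by (intro allI card_light_neighbours_le[OF G])
  ultimately have light: "card (E - heavy_edges E f d) \<le> k * d * card V"
    by (rule degenerate_card_edges_le[OF \<open>degenerate k W F\<close> \<open>finite V\<close> \<open>f ` V \<subseteq> W\<close>])
  have heavy: "card (heavy_edges E f d) \<le> d * card V"
    using C4_free_card_heavy_edges_le[OF G \<open>C4_free E\<close> fibres] .
  have "E = (E - heavy_edges E f d) \<union> heavy_edges E f d"
    unfolding heavy_edges_def by blast
  then have "card E \<le> card (E - heavy_edges E f d) + card (heavy_edges E f d)"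
    by (metis card_Un_le)
  with light heavy show ?thesis
    by (simp add: algebra_simps)
qed

lemma avg_degree_le:
  assumes "card E \<le> c * card V"
  shows "avg_degree V E \<le> 2 * real c"
proof (cases "card V = 0")
  case False
  from assms have "2 * real (card E) \<le> 2 * real c * real (card V)"
    by (metis of_nat_le_iff of_nat_mult mult_le_cancel_left_pos zero_less_numeral mult.assoc)
  with False show ?thesis
    unfolding avg_degree_def by (simp add: divide_le_eq)
qed (simp add: avg_degree_def)

definition part_of :: "'a set set \<Rightarrow> 'a \<Rightarrow> 'a set" where
  "part_of P x = (THE X. X \<in> P \<and> x \<in> X)"

lemma part_of_eq:
  assumes "partition_on A P" and "X \<in> P" and "x \<in> X"
  shows "part_of P x = X"
  unfolding part_of_def
proof (rule the_equality)
  show "\<And>Y. Y \<in> P \<and> x \<in> Y \<Longrightarrow> Y = X"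
    using assms partition_onD2 disjointD by blast
qed (use assms in simp)

lemma part_of_mem:
  assumes "partition_on A P" and "x \<in> A"
  shows "part_of P x \<in> P" and "x \<in> part_of P x"
proof -
  obtain X where "X \<in> P" "x \<in> X"
    using assms partition_onD1 by blast
  then show "part_of P x \<in> P" and "x \<in> part_of P x"
    using part_of_eq[OF assms(1)] by simp_all
qed

definition part_tag :: "'a set set \<Rightarrow> 'a set set \<Rightarrow> 'a \<Rightarrow> 'a set + 'a set" where
  "part_tag PA PB x = (if x \<in> \<Union>PA then Inl (part_of PA x) else Inr (part_of PB x))"

context
  fixes A B :: "'a set" and PA PB :: "'a set set"
  assumes PA: "partition_on A PA" and PB: "partition_on B PB" and disjoint: "A \<inter> B = {}"
begin

lemma part_tag_left: "x \<in> A \<Longrightarrow> part_tag PA PB x = Inl (part_of PA x)"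
  using partition_onD1[OF PA] unfolding part_tag_def by auto

lemma part_tag_right: "x \<in> B \<Longrightarrow> part_tag PA PB x = Inr (part_of PB x)"
  using partition_onD1[OF PA] disjoint unfolding part_tag_def by auto

lemma part_tag_mem_H_vertices: "x \<in> A \<union> B \<Longrightarrow> part_tag PA PB x \<in> H_vertices PA PB"
  using part_tag_left part_tag_right part_of_mem(1)[OF PA] part_of_mem(1)[OF PB]
  unfolding H_vertices_def by auto

lemma part_tag_fibre_left:
  assumes "z \<in> A"
  shows "{x\<in>A \<union> B. part_tag PA PB x = part_tag PA PB z} = part_of PA z"
proof (intro equalityI subsetI)
  fix x assume x: "x \<in> {x\<in>A \<union> B. part_tag PA PB x = part_tag PA PB z}"
  then have "x \<in> A"
    using assms part_tag_left part_tag_right by fastforce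
  with x assms have "part_of PA x = part_of PA z"
    using part_tag_left by simp
  with \<open>x \<in> A\<close> show "x \<in> part_of PA z"
    using part_of_mem(2)[OF PA] by metis
next
  fix x assume x: "x \<in> part_of PA z"
  then have "x \<in> A" and "part_of PA x = part_of PA z"
    using part_of_mem(1)[OF PA assms] partition_onD1[OF PA] part_of_eq[OF PA] by auto
  with assms show "x \<in> {x\<in>A \<union> B. part_tag PA PB x = part_tag PA PB z}"
    using part_tag_left by simp
qed

lemma part_tag_fibre_right:
  assumes "z \<in> B"
  shows "{x\<in>A \<union> B. part_tag PA PB x = part_tag PA PB z} = part_of PB z"
proof (intro equalityI subsetI)
  fix x assume x: "x \<in> {x\<in>A \<union> B. part_tag PA PB x = part_tag PA PB z}"
  then have "x \<in> B"
    using assms part_tag_left part_tag_right by fastforce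
  with x assms have "part_of PB x = part_of PB z"
    using part_tag_right by simp
  with \<open>x \<in> B\<close> show "x \<in> part_of PB z"
    using part_of_mem(2)[OF PB] by metis
next
  fix x assume x: "x \<in> part_of PB z"
  then have "x \<in> B" and "part_of PB x = part_of PB z"
    using part_of_mem(1)[OF PB assms] partition_onD1[OF PB] part_of_eq[OF PB] by auto
  with assms show "x \<in> {x\<in>A \<union> B. part_tag PA PB x = part_tag PA PB z}"
    using part_tag_right by simp
qed

lemma part_tag_card_fibre_le:
  assumes "\<forall>X\<in>PA \<union> PB. card X \<le> m"
  shows "card {z\<in>A \<union> B. part_tag PA PB z = u} \<le> m"
proof (cases "\<exists>z\<in>A \<union> B. part_tag PA PB z = u")
  case True
  then obtain z where "z \<in> A \<union> B" and "u = part_tag PA PB z"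
    by blast
  then have "{x\<in>A \<union> B. part_tag PA PB x = u} \<in> PA \<union> PB"
    using part_tag_fibre_left part_tag_fibre_right part_of_mem(1)[OF PA] part_of_mem(1)[OF PB] by auto
  with assms show ?thesis
    by blast
next
  case False
  then have no_fibre: "{z\<in>A \<union> B. part_tag PA PB z = u} = {}"
    by blast
  show ?thesis
    unfolding no_fibre by simp
qed

lemma part_tag_maps_edges:
  assumes "\<forall>e\<in>E. \<exists>a\<in>A. \<exists>b\<in>B. e = {a, b}"
  shows "\<forall>e\<in>E. \<exists>a b. e = {a, b} \<and> {part_tag PA PB a, part_tag PA PB b} \<in> H_edges E PA PB"
proof
  fix e assume "e \<in> E"
  then obtain a b where "a \<in> A" "b \<in> B" "e = {a, b}"
    using assms by blast
  moreover have "part_of PA a \<in> PA" "a \<in> part_of PA a" "part_of PB b \<in> PB" "b \<in> part_of PB b"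
    using part_of_mem[OF PA \<open>a \<in> A\<close>] part_of_mem[OF PB \<open>b \<in> B\<close>] by simp_all
  ultimately have "{part_tag PA PB a, part_tag PA PB b} \<in> H_edges E PA PB"
    using \<open>e \<in> E\<close> unfolding H_edges_def part_tag_left[OF \<open>a \<in> A\<close>] part_tag_right[OF \<open>b \<in> B\<close>] by blast
  with \<open>e = {a, b}\<close> show "\<exists>a b. e = {a, b} \<and> {part_tag PA PB a, part_tag PA PB b} \<in> H_edges E PA PB"
    by blast
qed

end

theorem lemma17:
  fixes k d :: nat and V A B :: "'a set" and E :: "'a set set" and PA PB :: "'a set set"
  assumes "k \<ge> 4" and "d \<ge> 4"
    and "simple_graph V E"
    and "C4_free E"
    and "bipartite_classes V E A B"
    and "partition_on A PA" and "partition_on B PB"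
    and "\<forall>X\<in>PA. card X \<le> d^2" and "\<forall>Y\<in>PB. card Y \<le> d^2"
    and "degenerate k (H_vertices PA PB) (H_edges E PA PB)"
  shows "avg_degree V E \<le> 13 * real k * real d"
proof -
  have "V = A \<union> B" and "A \<inter> B = {}" and "\<forall>e\<in>E. \<exists>a\<in>A. \<exists>b\<in>B. e = {a, b}"
    using \<open>bipartite_classes V E A B\<close> unfolding bipartite_classes_def by auto
  note partitions = \<open>partition_on A PA\<close> \<open>partition_on B PB\<close> \<open>A \<inter> B = {}\<close>
  have "card E \<le> (k + 1) * d * card V"
  proof (rule C4_free_card_edges_le_degenerate_image[OF assms(3,4,10)])
    show "part_tag PA PB ` V \<subseteq> H_vertices PA PB"
      using part_tag_mem_H_vertices[OF partitions] \<open>V = A \<union> B\<close> by blast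
    show "\<forall>e\<in>E. \<exists>a b. e = {a, b} \<and> {part_tag PA PB a, part_tag PA PB b} \<in> H_edges E PA PB"
      by (rule part_tag_maps_edges[OF partitions]) fact
    have "\<forall>X\<in>PA \<union> PB. card X \<le> d^2"
      using assms(8,9) by blast
    then show "\<forall>u. card {z\<in>V. part_tag PA PB z = u} \<le> d^2"
      unfolding \<open>V = A \<union> B\<close> by (intro allI part_tag_card_fibre_le[OF partitions])
  qed
  then have "avg_degree V E \<le> 2 * real ((k + 1) * d)"
    by (rule avg_degree_le)
  also have "\<dots> = (2 * real k + 2) * real d"
    by (simp add: algebra_simps)
  also have "\<dots> \<le> 13 * real k * real d"
    using \<open>k \<ge> 4\<close> by (intro mult_right_mono) auto
  finally show ?thesis .
qed

end
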